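(* Let $P:H_0(\tilde S_N)\to\operatorname{NDPF}^{(1)}_N$ be the monoid morphism with $P(\pi_i)=f_i$ for $i\in\{0,\dots,N-1\}$. For every $g\in \operatorname{NDPF}^{(1)}_N$, the fiber $\{w\in\tilde S_N: P(\pi_w)=g\}$ contains a unique $[321]$-avoiding affine permutation.
   Context: $\tilde S_N$ is the group of bijections $\sigma:\mathbb{Z}\to\mathbb{Z}$ with $\sigma(i+N)=\sigma(i)+N$ and $\sum_{i=1}^N\sigma(i)=\binom{N+1}{2}$, generated by $s_0,\dots,s_{N-1}$ where $s_i$ exchanges $j,j+1$ for all $j\equiv i\pmod N$ (indices mod $N$). $H_0(\tilde S_N)$ is generated by $\pi_i$, $i\in\mathbb{Z}/N$, with $\pi_i^2=\pi_i$, $\pi_i\pi_j=\pi_j\pi_i$ for $i,j$ non-adjacent mod $N$, and $\pi_i\pi_{i+1}\pi_i=\pi_{i+1}\pi_i\pi_{i+1}$; $\pi_w=\pi_{i_1}\cdots\pi_{i_k}$ for a reduced word $w=s_{i_1}\cdots s_{i_k}$, a bijection with $\tilde S_N$. An affine permutation $x$ is $[321]$-avoiding if there are no integers $a<b<c$ with $x(a)>x(b)>x(c)$. $\operatorname{NDPF}^{(1)}_N$ is the set of $f:\mathbb{Z}\to\mathbb{Z}$ that are regressive ($f(i)\le i$), order preserving and skew periodic ($f(i+N)=f(i)+N$), other than the shifts $i\mapsto i-t$ with $t\ne0$; functions act on the right, so $j.(fg)=(j.f).g$ (apply $f$ first). For $i\in\{0,\dots,N-1\}$, $f_i$ is the function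 with $f_i(j)=j-1$ if $j\equiv i+1\pmod N$ and $f_i(j)=j$ otherwise. *)

theory Defs
  imports Main
begin

definition affS :: "nat \<Rightarrow> (int \<Rightarrow> int) set" where
  "affS N = {\<sigma>. bij \<sigma> \<and> (\<forall>i. \<sigma> (i + int N) = \<sigma> i + int N)
                 \<and> (\<Sum>i=1..int N. \<sigma> i) = int N * (int N + 1) div 2}"

definition s_gen :: "nat \<Rightarrow> nat \<Rightarrow> int \<Rightarrow> int" where
  "s_gen N i j = (if j mod int N = int i mod int N then j + 1
                  else if j mod int N = (int i + 1) mod int N then j - 1 else j)"

definition word_perm :: "nat \<Rightarrow> nat list \<Rightarrow> int \<Rightarrow> int" where
  "word_perm N ws = foldr (\<lambda>i acc. s_gen N i \<circ> acc) ws id"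

definition aff_length :: "nat \<Rightarrow> (int \<Rightarrow> int) \<Rightarrow> nat" where
  "aff_length N w = (LEAST k. \<exists>ws. length ws = k \<and> set ws \<subseteq> {..<N} \<and> word_perm N ws = w)"

definition reduced_word :: "nat \<Rightarrow> (int \<Rightarrow> int) \<Rightarrow> nat list \<Rightarrow> bool" where
  "reduced_word N w ws \<longleftrightarrow> set ws \<subseteq> {..<N} \<and> word_perm N ws = w \<and> length ws = aff_length N w"

definition avoids321 :: "(int \<Rightarrow> int) \<Rightarrow> bool" where
  "avoids321 x \<longleftrightarrow> \<not> (\<exists>a b c. a < b \<and> b < c \<and> x a > x b \<and> x b > x c)"

definition f_gen :: "nat \<Rightarrow> nat \<Rightarrow> int \<Rightarrow> int" where
  "f_gen N i j = (if j mod int N = (int i + 1) mod int N then j - 1 else j)"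

definition NDPF1 :: "nat \<Rightarrow> (int \<Rightarrow> int) set" where
  "NDPF1 N = {f. (\<forall>i. f i \<le> i) \<and> mono f \<and> (\<forall>i. f (i + int N) = f i + int N)
                 \<and> \<not> (\<exists>t. t \<noteq> 0 \<and> f = (\<lambda>i. i - t))}"

text \<open>Product f_{i1} ... f_{ik} with functions acting on the right
  (j.(fg) = (j.f).g), i.e. f_{i1} is applied first.\<close>
definition word_f :: "nat \<Rightarrow> nat list \<Rightarrow> int \<Rightarrow> int" where
  "word_f N ws = foldl (\<lambda>acc i. f_gen N i \<circ> acc) id ws"

definition P_hecke :: "nat \<Rightarrow> (int \<Rightarrow> int) \<Rightarrow> int \<Rightarrow> int" where
  "P_hecke N w = word_f N (SOME ws. reduced_word N w ws)"

end

theory Submission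
  imports Defs
begin

text \<open>For a reduced word of \<open>w\<close>, the number of letters equals the number of inversions of \<open>w\<close>,
  so each letter \<open>s_i\<close> is applied at an ascent, where \<open>\<pi>_i\<close> acts as \<open>f_i\<close>; by induction,
  \<open>g = P(\<pi>\<^sub>w)\<close> is the map with \<open>g j = min {p. j \<le> w p}\<close>.

  If moreover \<open>w\<close> avoids 321, this forces \<open>w (g j) = j\<close> at every ascent \<open>j\<close> of \<open>g\<close> and makes \<open>w\<close>
  increasing off the image of \<open>g\<close>. Two such affine permutations cannot cross each other there,
  and the normalisation of the window sum rules out \<open>w \<le> w'\<close> unless \<open>w = w'\<close>.

  Conversely, invert \<open>g\<close> on its ascents and map the complement of the image of \<open>g\<close> increasingly
  onto the non-ascents, shifted so that as many points cross \<open>0\<close> downwards as upwards. The window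
  sum of an affine bijection is \<open>N\<close> times this crossing balance, so the result lies in the affine
  symmetric group, and it is 321-avoiding with \<open>P(\<pi>\<^sub>w) = g\<close>.\<close>

definition skew_periodic :: "nat \<Rightarrow> (int \<Rightarrow> int) \<Rightarrow> bool" where
  "skew_periodic N f \<longleftrightarrow> (\<forall>i. f (i + int N) = f i + int N)"

lemma skew_periodic_add_mult:
  assumes "skew_periodic N f"
  shows "f (i + t * int N) = f i + t * int N"
proof (induction t rule: int_induct[where k = 0])
  case base then show ?case by simp
next
  case (step1 t)
  then show ?case using assms[unfolded skew_periodic_def, rule_format, of "i + t * int N"]
    by (simp add: algebra_simps)
next
  case (step2 t)
  then show ?case using assms[unfolded skew_periodic_def, rule_format, of "i + (t - 1) * int N"]
    by (simp add: algebra_simps)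
qed

lemma skew_periodic_comp:
  "skew_periodic N f \<Longrightarrow> skew_periodic N g \<Longrightarrow> skew_periodic N (f \<circ> g)"
  unfolding skew_periodic_def by simp

lemma window_decomp:
  assumes "N > 0"
  obtains k t where "k \<in> {1..int N}" "a = k + t * int N"
proof -
  have "0 \<le> (a - 1) mod int N" "(a - 1) mod int N < int N" using assms by simp_all
  then show ?thesis using that[of "(a - 1) mod int N + 1" "(a - 1) div int N"]
    by (simp add: algebra_simps)
qed

lemma window_unique:
  assumes "k \<in> {1..int N}" "k' \<in> {1..int N}" "k + t * int N = k' + t' * int N"
  shows "t = t'"
proof (rule ccontr)
  assume "t \<noteq> t'"
  then have "int N * 1 \<le> int N * \<bar>t - t'\<bar>" by (intro mult_left_mono) auto
  then have "int N \<le> \<bar>(t - t') * int N\<bar>" by (simp add: abs_mult mult.commute)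
  moreover have "(t - t') * int N = k' - k" using assms(3) by (simp add: algebra_simps)
  ultimately show False using assms(1,2) by auto
qed

lemma multiple_in_window_eq_0:
  assumes "int N dvd x" "\<bar>x\<bar> < int N"
  shows "x = 0"
  using dvd_imp_le_int[of x "int N"] assms by linarith

lemma window_translate_pos:
  assumes "k \<in> {1..int N}"
  shows "0 < k + t * int N \<longleftrightarrow> 0 \<le> t"
proof
  assume "0 < k + t * int N"
  show "0 \<le> t"
  proof (rule ccontr)
    assume "\<not> 0 \<le> t"
    then have "t * int N \<le> (-1) * int N" by (intro mult_right_mono) auto
    then show False using assms \<open>0 < k + t * int N\<close> by simp
  qed
next
  assume "0 \<le> t"
  then have "0 \<le> t * int N" by simp
  then show "0 < k + t * int N" using assms by simp
qed

lemma skew_periodic_bounded_displacement: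
  assumes "skew_periodic N f" "N > 0"
  obtains C where "\<And>x. \<bar>f x - x\<bar> \<le> C"
proof
  fix x
  obtain k t where k: "k \<in> {1..int N}" and x: "x = k + t * int N"
    using window_decomp[OF assms(2)] .
  have "\<bar>f x - x\<bar> = \<bar>f k - k\<bar>" unfolding x skew_periodic_add_mult[OF assms(1)] by simp
  also have "\<dots> \<le> Max ((\<lambda>k. \<bar>f k - k\<bar>) ` {1..int N})" using k by (intro Max_ge) auto
  finally show "\<bar>f x - x\<bar> \<le> Max ((\<lambda>k. \<bar>f k - k\<bar>) ` {1..int N})" .
qed

lemma skew_periodic_eqI:
  assumes "skew_periodic N f" "skew_periodic N g" "N > 0" "\<And>k. k \<in> {1..int N} \<Longrightarrow> f k = g k"
  shows "f = g"
proof
  fix x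
  obtain k t where "k \<in> {1..int N}" "x = k + t * int N" using window_decomp[OF assms(3)] .
  then show "f x = g x" using assms by (simp add: skew_periodic_add_mult)
qed

lemma sum_periodic_window:
  fixes h :: "int \<Rightarrow> 'a::ab_group_add"
  assumes "\<And>x. h (x + int N) = h x"
  shows "(\<Sum>k\<in>{m<..m + int N}. h k) = (\<Sum>k\<in>{1..int N}. h k)"
proof -
  have step: "(\<Sum>k\<in>{m + 1<..m + 1 + int N}. h k) = (\<Sum>k\<in>{m<..m + int N}. h k)" for m
  proof (cases "N = 0")
    case False
    have e1: "{m<..m + 1 + int N} = insert (m + 1) {m + 1<..m + 1 + int N}"
      and e2: "{m<..m + 1 + int N} = insert (m + 1 + int N) {m<..m + int N}"
      using False by auto
    have "sum h {m<..m + 1 + int N} = h (m + 1) + sum h {m + 1<..m + 1 + int N}"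
      unfolding e1 by (simp add: sum.insert)
    moreover have "sum h {m<..m + 1 + int N} = h (m + 1 + int N) + sum h {m<..m + int N}"
      unfolding e2 by (simp add: sum.insert)
    ultimately have "h (m + 1) + sum h {m + 1<..m + 1 + int N} = h (m + 1 + int N) + sum h {m<..m + int N}"
      by simp
    then show ?thesis using assms[of "m + 1"] by simp
  qed simp
  have "(\<Sum>k\<in>{m<..m + int N}. h k) = (\<Sum>k\<in>{0<..0 + int N}. h k)"
  proof (induction m rule: int_induct[where k = 0])
    case (step2 m) then show ?case using step[of "m - 1"] by simp
  qed (use step in simp_all)
  also have "{0<..0 + int N} = {1..int N}" by auto
  finally show ?thesis .
qed

lemma s_gen_eq:
  "s_gen N i j = (if int N dvd j - int i then j + 1
                        else if int N dvd j - int i - 1 then j - 1 else j)"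
proof -
  have "(j mod int N = int i mod int N) = (int N dvd j - int i)"
       "(j mod int N = (int i + 1) mod int N) = (int N dvd j - (int i + 1))"
    by (rule mod_eq_dvd_iff)+
  then show ?thesis unfolding s_gen_def by (simp add: algebra_simps)
qed

lemma f_gen_eq:
  "f_gen N i j = (if int N dvd j - int i - 1 then j - 1 else j)"
proof -
  have "(j mod int N = (int i + 1) mod int N) = (int N dvd j - (int i + 1))"
    by (rule mod_eq_dvd_iff)
  then show ?thesis unfolding f_gen_def by (simp add: algebra_simps)
qed

lemma not_dvd_both:
  assumes "N \<ge> 2" "int N dvd x" "int N dvd x - 1"
  shows False
proof -
  have "int N dvd x - (x - 1)" using assms(2,3) by (rule dvd_diff)
  then show False using assms(1) by simp
qed

lemma s_gen_skew_periodic: "skew_periodic N (s_gen N i)"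
  unfolding skew_periodic_def
proof
  fix j
  have "int N dvd j + int N - int i \<longleftrightarrow> int N dvd j - int i"
    using dvd_add_left_iff[of "int N" "int N" "j - int i"] by (simp add: algebra_simps)
  moreover have "int N dvd j + int N - int i - 1 \<longleftrightarrow> int N dvd j - int i - 1"
    using dvd_add_left_iff[of "int N" "int N" "j - int i - 1"] by (simp add: algebra_simps)
  ultimately show "s_gen N i (j + int N) = s_gen N i j + int N"
    by (simp add: s_gen_eq)
qed

lemma s_gen_s_gen:
  assumes "N \<ge> 2"
  shows "s_gen N i (s_gen N i j) = j"
  using not_dvd_both[OF assms, of "j - int i"] not_dvd_both[OF assms, of "j + 1 - int i"]
  by (auto simp: s_gen_eq algebra_simps)

lemma bij_s_gen:
  assumes "N \<ge> 2"
  shows "bij (s_gen N i)"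
  by (rule o_bij[of "s_gen N i"]) (auto simp: s_gen_s_gen[OF assms])

lemma s_gen_generator: "s_gen N i (int i) = int i + 1"
  by (simp add: s_gen_eq)

lemma s_gen_generator_Suc: "N \<ge> 2 \<Longrightarrow> s_gen N i (int i + 1) = int i"
  by (simp add: s_gen_eq)

lemma s_gen_window:
  assumes "N \<ge> 2" "a \<in> {int i - 1<..int i - 1 + int N}"
  shows "s_gen N i a \<in> {int i - 1<..int i - 1 + int N}"
proof -
  have "int N dvd a - int i \<Longrightarrow> a = int i"
    using multiple_in_window_eq_0[of N "a - int i"] assms(2) by auto
  moreover have "int N dvd a - int i - 1 \<Longrightarrow> a = int i + 1 \<or> a = int i"
    using multiple_in_window_eq_0[of N "a - int i - 1"] assms(2) by auto
  ultimately show ?thesis using assms by (auto simp: s_gen_eq)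
qed

lemma s_gen_inversion:
  assumes "a \<in> {int i - 1<..int i - 1 + int N}" "a < b" "s_gen N i b < s_gen N i a"
  shows "a = int i \<and> b = int i + 1"
proof -
  have bounds: "j - 1 \<le> s_gen N i j" "s_gen N i j \<le> j + 1" for j
    by (simp_all add: s_gen_eq)
  then have b: "b = a + 1" using bounds[of a] bounds[of b] assms(2,3) by linarith
  have "int N dvd a - int i"
    using assms(3) b by (auto simp: s_gen_eq split: if_splits)
  then have "a = int i" using multiple_in_window_eq_0[of N "a - int i"] assms(1) by auto
  then show ?thesis using b by simp
qed

lemma f_gen_le: "f_gen N i j \<le> j"
  by (simp add: f_gen_eq)

lemma mono_f_gen: "mono (f_gen N i)"
proof (rule monoI)
  fix x y :: int
  assume "x \<le> y"
  then show "f_gen N i x \<le> f_gen N i y" by (cases "x = y") (auto simp: f_gen_eq)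
qed

lemma affS_iff:
  "w \<in> affS N \<longleftrightarrow> bij w \<and> skew_periodic N w \<and> (\<Sum>k\<in>{1..int N}. w k - k) = 0"
proof -
  have "(\<Sum>k\<in>{1..int N}. k) = int N * (int N + 1) div 2"
    by (cases "N = 0") (simp_all add: Sum_Icc_int)
  then show ?thesis unfolding affS_def skew_periodic_def by (auto simp: sum_subtractf)
qed

lemma id_in_affS: "id \<in> affS N"
  unfolding affS_iff skew_periodic_def by simp

lemma affS_comp_s_gen:
  assumes N: "N \<ge> 2" and w: "w \<in> affS N"
  shows "w \<circ> s_gen N i \<in> affS N"
proof -
  let ?s = "s_gen N i" and ?W = "{int i - 1<..int i - 1 + int N}"
  have bij: "bij w" and per: "skew_periodic N w" and sum0: "(\<Sum>k\<in>{1..int N}. w k - k) = 0"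
    using w unfolding affS_iff by auto
  have per': "skew_periodic N (w \<circ> ?s)" using per s_gen_skew_periodic by (rule skew_periodic_comp)
  have permutes: "bij_betw ?s ?W ?W"
    by (rule bij_betw_byWitness[where f' = ?s])
      (simp_all add: s_gen_s_gen[OF N] image_subset_iff s_gen_window[OF N] del: greaterThanAtMost_iff)
  have "(\<Sum>k\<in>{1..int N}. (w \<circ> ?s) k - k) = (\<Sum>k\<in>?W. (w \<circ> ?s) k - k)"
    using sum_periodic_window[where h = "\<lambda>k. (w \<circ> ?s) k - k"] per' by (simp add: skew_periodic_def)
  also have "\<dots> = (\<Sum>k\<in>?W. w (?s k) - ?s k) + ((\<Sum>k\<in>?W. ?s k) - (\<Sum>k\<in>?W. k))"
    by (simp add: sum.distrib sum_subtractf)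
  also have "\<dots> = (\<Sum>k\<in>?W. w k - k)"
    using sum.reindex_bij_betw[OF permutes, of "\<lambda>k. w k - k"]
      sum.reindex_bij_betw[OF permutes, of "\<lambda>k. k"] by simp
  also have "\<dots> = 0"
    using sum_periodic_window[where h = "\<lambda>k. w k - k"] per sum0 by (simp add: skew_periodic_def)
  finally show ?thesis using bij_comp[OF bij_s_gen[OF N] bij] per' unfolding affS_iff by simp
qed

lemma skew_periodic_strict_mono_shift:
  assumes "N > 0" "skew_periodic N f" "\<And>j. f j < f (j + 1)"
  obtains c where "f = (\<lambda>j. j + c)"
proof -
  have grow: "f j + int k \<le> f (j + int k)" for j k
  proof (induction k)
    case (Suc k)
    have e: "j + int (Suc k) = j + int k + 1" by simp
    show ?case unfolding e using Suc assms(3)[of "j + int k"] by linarith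
  qed simp
  have succ: "f (j + 1) = f j + 1" for j
  proof -
    have "f (j + 1) + int (N - 1) \<le> f (j + 1 + int (N - 1))" by (rule grow)
    moreover have "j + 1 + int (N - 1) = j + int N" using assms(1) by simp
    moreover have "f (j + int N) = f j + int N" using assms(2) unfolding skew_periodic_def by blast
    ultimately have "f (j + 1) \<le> f j + 1" by simp
    then show ?thesis using assms(3)[of j] by simp
  qed
  have "f j = j + f 0" for j
  proof (induction j rule: int_induct[where k = 0])
    case (step2 j) then show ?case using succ[of "j - 1"] by simp
  qed (simp_all add: succ)
  then have "f = (\<lambda>j. j + f 0)" by (rule ext)
  then show ?thesis by (rule that)
qed

lemma affS_descent:
  assumes N: "N > 0" and w: "w \<in> affS N" and "w \<noteq> id"
  shows "\<exists>i<N. w (int i + 1) < w (int i)"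
proof (rule ccontr)
  assume no_descent: "\<not> ?thesis"
  have bij: "bij w" and per: "skew_periodic N w" and sum0: "(\<Sum>k\<in>{1..int N}. w k - k) = 0"
    using w unfolding affS_iff by auto
  have "w j < w (j + 1)" for j
  proof -
    define i where "i = nat (j mod int N)"
    define t where "t = j div int N"
    have i: "i < N" and j: "j = int i + t * int N"
      using N unfolding i_def t_def by (simp_all add: nat_less_iff)
    have "w (int i) \<noteq> w (int i + 1)" using bij_is_inj[OF bij] by (simp add: inj_eq)
    then have "w (int i) < w (int i + 1)" using no_descent i by force
    moreover have "w j = w (int i) + t * int N" unfolding j by (rule skew_periodic_add_mult[OF per])
    moreover have "w (j + 1) = w (int i + 1) + t * int N"
      using skew_periodic_add_mult[OF per, of "int i + 1" t] j by (simp add: algebra_simps)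
    ultimately show ?thesis by simp
  qed
  then obtain c where shift: "w = (\<lambda>j. j + c)" using skew_periodic_strict_mono_shift[OF N per] by blast
  then have "int N * c = 0" using sum0 by simp
  then show False using shift N \<open>w \<noteq> id\<close> by (simp add: id_def)
qed

section \<open>Inversions\<close>

definition inversions :: "nat \<Rightarrow> (int \<Rightarrow> int) \<Rightarrow> int \<Rightarrow> (int \<times> int) set" where
  "inversions N w m = {(a, b). a \<in> {m<..m + int N} \<and> a < b \<and> w b < w a}"

definition inv_count :: "nat \<Rightarrow> (int \<Rightarrow> int) \<Rightarrow> nat" where
  "inv_count N w = card (inversions N w 0)"

lemma finite_inversions:
  assumes "skew_periodic N w" "N > 0"
  shows "finite (inversions N w m)"
proof -
  obtain C where C: "\<And>x. \<bar>w x - x\<bar> \<le> C"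
    using skew_periodic_bounded_displacement[OF assms] by blast
  have "inversions N w m \<subseteq> {m<..m + int N} \<times> {m..m + int N + 2 * C}"
  proof clarify
    fix a b assume "(a, b) \<in> inversions N w m"
    then have "a \<in> {m<..m + int N}" "a < b" "w b < w a" unfolding inversions_def by auto
    moreover have "\<bar>w a - a\<bar> \<le> C" "\<bar>w b - b\<bar> \<le> C" by (rule C)+
    ultimately show "a \<in> {m<..m + int N} \<and> b \<in> {m..m + int N + 2 * C}" by auto
  qed
  then show ?thesis by (rule finite_subset) simp
qed

lemma card_inversions_Suc:
  assumes per: "skew_periodic N w" and N: "N > 0"
  shows "card (inversions N w (m + 1)) = card (inversions N w m)"
proof -
  let ?I = "inversions N w"
  define A where "A = {p \<in> ?I m. fst p = m + 1}"
  define \<tau> where "\<tau> = (\<lambda>(a, b). (a + int N, b + int N))"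
  have shift: "w (x + int N) = w x + int N" for x using per unfolding skew_periodic_def by blast
  have "(a, b) \<in> ?I (m + 1) \<longleftrightarrow> (a, b) \<in> ?I m - A \<or> (a - int N, b - int N) \<in> A" for a b
    using shift[of "a - int N"] shift[of "b - int N"] N
    unfolding inversions_def A_def by auto
  moreover have "(a - int N, b - int N) \<in> A \<longleftrightarrow> (a, b) \<in> \<tau> ` A" for a b
    unfolding \<tau>_def by (force simp: image_iff)
  ultimately have split: "?I (m + 1) = (?I m - A) \<union> \<tau> ` A" by auto
  have disjoint: "(?I m - A) \<inter> \<tau> ` A = {}"
    using N unfolding A_def \<tau>_def inversions_def by auto
  have "inj \<tau>" unfolding \<tau>_def by (auto simp: inj_def)
  then have card_\<tau>: "card (\<tau> ` A) = card A" by (simp add: card_image inj_on_subset)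
  have fin: "finite (?I m)" by (rule finite_inversions[OF per N])
  have sub: "A \<subseteq> ?I m" unfolding A_def by auto
  then have "card (?I m) = card (?I m - A) + card A"
    using card_Diff_subset[OF finite_subset[OF sub fin] sub] card_mono[OF fin sub] by simp
  moreover have "card (?I (m + 1)) = card (?I m - A) + card (\<tau> ` A)"
    unfolding split using fin sub disjoint by (intro card_Un_disjoint) (auto intro: finite_subset)
  ultimately show ?thesis using card_\<tau> by simp
qed

lemma card_inversions:
  assumes "skew_periodic N w" "N > 0"
  shows "card (inversions N w m) = inv_count N w"
  unfolding inv_count_def
proof (induction m rule: int_induct[where k = 0])
  case (step2 m) then show ?case using card_inversions_Suc[OF assms, of "m - 1"] by simp
qed (simp_all add: card_inversions_Suc[OF assms])

lemma inv_count_id: "inv_count N id = 0"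
proof -
  have "inversions N id 0 = {}" unfolding inversions_def by auto
  then show ?thesis unfolding inv_count_def by simp
qed

text \<open>Away from the pair \<open>(i, i + 1)\<close>, the inversions of \<open>w \<circ> s_i\<close> and of \<open>w\<close> in the window
  starting at \<open>i\<close> correspond under \<open>(a, b) \<mapsto> (s_i a, s_i b)\<close>.\<close>

lemma card_inversions_comp_s_gen_off_pair:
  assumes N: "N \<ge> 2" and per: "skew_periodic N w"
  shows "card (inversions N (w \<circ> s_gen N i) (int i - 1) - {(int i, int i + 1)})
           = card (inversions N w (int i - 1) - {(int i, int i + 1)})"
proof -
  let ?s = "s_gen N i" and ?m = "int i - 1" and ?p = "(int i, int i + 1)"
  define X where "X v = inversions N v ?m - {?p}" for v
  define \<sigma> where "\<sigma> = (\<lambda>(a, b). (?s a, ?s b))"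
  have ss: "?s (?s x) = x" for x by (rule s_gen_s_gen[OF N])
  have maps: "\<sigma> ` X (v \<circ> ?s) \<subseteq> X v" for v
  proof (rule image_subsetI)
    fix p assume "p \<in> X (v \<circ> ?s)"
    moreover obtain a b where p: "p = (a, b)" by fastforce
    ultimately have a: "a \<in> {?m<..?m + int N}" and "a < b" "v (?s b) < v (?s a)" "(a, b) \<noteq> ?p"
      unfolding X_def inversions_def by auto
    then have "\<not> ?s b < ?s a" using s_gen_inversion[OF a] by auto
    moreover have "?s a \<noteq> ?s b" using \<open>a < b\<close> ss by (metis less_irrefl)
    moreover have "(?s a, ?s b) \<noteq> ?p"
      using \<open>a < b\<close> ss[of a] ss[of b] s_gen_generator s_gen_generator_Suc[OF N] by auto
    ultimately show "\<sigma> p \<in> X v" unfolding p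
      using s_gen_window[OF N a] \<open>v (?s b) < v (?s a)\<close>
      unfolding \<sigma>_def X_def inversions_def by auto
  qed
  have "inj \<sigma>" by (rule inj_on_inverseI[of _ \<sigma>]) (auto simp: \<sigma>_def ss)
  have per': "skew_periodic N (w \<circ> ?s)" using per s_gen_skew_periodic by (rule skew_periodic_comp)
  have fin: "finite (X w)" "finite (X (w \<circ> ?s))"
    unfolding X_def using finite_inversions[OF per] finite_inversions[OF per'] N by auto
  have "w \<circ> ?s \<circ> ?s = w" using ss by (auto simp: fun_eq_iff)
  then have "\<sigma> ` X w \<subseteq> X (w \<circ> ?s)" using maps[of "w \<circ> ?s"] by simp
  then have "card (X w) \<le> card (X (w \<circ> ?s))"
    using card_inj_on_le[OF inj_on_subset[OF \<open>inj \<sigma>\<close>]] fin by blast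
  moreover have "card (X (w \<circ> ?s)) \<le> card (X w)"
    using card_inj_on_le[OF inj_on_subset[OF \<open>inj \<sigma>\<close>] maps[of w]] fin by blast
  ultimately show ?thesis unfolding X_def by simp
qed

lemma inv_count_comp_s_gen:
  assumes N: "N \<ge> 2" and per: "skew_periodic N w" and "inj w"
  shows "int (inv_count N (w \<circ> s_gen N i))
           = int (inv_count N w) + (if w (int i) < w (int i + 1) then 1 else -1)"
proof -
  let ?m = "int i - 1" and ?p = "(int i, int i + 1)"
  have card_split: "int (inv_count N v)
      = int (card (inversions N v ?m - {?p})) + (if ?p \<in> inversions N v ?m then 1 else 0)"
    if "skew_periodic N v" for v
  proof -
    have "finite (inversions N v ?m)" using finite_inversions[OF that] N by simp
    then have "card (inversions N v ?m) = card (inversions N v ?m - {?p}) + (if ?p \<in> inversions N v ?m then 1 else 0)"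
      using card_Suc_Diff1[of "inversions N v ?m" ?p] by auto
    then show ?thesis using card_inversions[OF that, of ?m] N by simp
  qed
  have per': "skew_periodic N (w \<circ> s_gen N i)" using per s_gen_skew_periodic by (rule skew_periodic_comp)
  have "?p \<in> inversions N (w \<circ> s_gen N i) ?m \<longleftrightarrow> w (int i) < w (int i + 1)"
    and "?p \<in> inversions N w ?m \<longleftrightarrow> w (int i + 1) < w (int i)"
    using N s_gen_generator s_gen_generator_Suc[OF N] unfolding inversions_def by auto
  moreover have "w (int i) \<noteq> w (int i + 1)" using \<open>inj w\<close> by (simp add: inj_eq)
  ultimately show ?thesis
    using card_split[OF per] card_split[OF per'] card_inversions_comp_s_gen_off_pair[OF N per] by auto
qed

section \<open>The image of \<open>\<pi>\<^sub>w\<close> under \<open>P\<close>\<close>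

text \<open>\<open>hecke_image w g\<close> says that \<open>g j\<close> is the least \<open>p\<close> with \<open>j \<le> w p\<close>;
  it characterises \<open>g = P(\<pi>\<^sub>w)\<close> (see \<open>P_hecke_iff\<close>).\<close>

definition hecke_image :: "(int \<Rightarrow> int) \<Rightarrow> (int \<Rightarrow> int) \<Rightarrow> bool" where
  "hecke_image w g \<longleftrightarrow> mono g \<and> (\<forall>p. g (w p) \<le> p) \<and> (\<forall>j. j \<le> w (g j))"

lemma hecke_image_unique:
  assumes "hecke_image w g" "hecke_image w g'"
  shows "g = g'"
proof -
  have le: "g j \<le> g' j" if "hecke_image w g" "hecke_image w g'" for g g' j
  proof -
    have "j \<le> w (g' j)" using that(2) unfolding hecke_image_def by blast
    then have "g j \<le> g (w (g' j))" using that(1) unfolding hecke_image_def by (blast dest: monoD)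
    also have "\<dots> \<le> g' j" using that(1) unfolding hecke_image_def by blast
    finally show ?thesis .
  qed
  show ?thesis using le[OF assms] le[OF assms(2,1)] by (simp add: antisym fun_eq_iff)
qed

lemma hecke_image_id: "hecke_image id id"
  unfolding hecke_image_def by (simp add: mono_def)

lemma hecke_image_comp_s_gen_below:
  assumes "hecke_image w g"
  shows "f_gen N i (g (w (s_gen N i p))) \<le> p"
proof -
  have below: "g (w q) \<le> q" for q using assms unfolding hecke_image_def by blast
  show ?thesis
  proof (cases "int N dvd p - int i")
    case True
    then have "s_gen N i p = p + 1" "f_gen N i (p + 1) = p" by (simp_all add: s_gen_eq f_gen_eq)
    then show ?thesis using below[of "p + 1"] f_gen_le[of N i "g (w (p + 1))"]
      by (cases "g (w (p + 1)) = p + 1") auto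
  next
    case False
    then have "s_gen N i p \<le> p" by (simp add: s_gen_eq)
    then show ?thesis using below[of "s_gen N i p"] f_gen_le[of N i "g (w (s_gen N i p))"] by simp
  qed
qed

lemma hecke_image_comp_s_gen_above:
  assumes N: "N \<ge> 2" and per: "skew_periodic N w"
    and ascent: "w (int i) < w (int i + 1)" and g: "hecke_image w g"
  shows "j \<le> w (s_gen N i (f_gen N i (g j)))"
proof -
  have above: "j \<le> w (g j)" using g unfolding hecke_image_def by blast
  consider (fall) "int N dvd g j - int i - 1"
    | (rise) "int N dvd g j - int i" | (other) "\<not> int N dvd g j - int i - 1" "\<not> int N dvd g j - int i"
    by blast
  then show ?thesis
  proof cases
    case fall
    then have "s_gen N i (f_gen N i (g j)) = g j" by (simp add: f_gen_eq s_gen_eq algebra_simps)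
    then show ?thesis using above by simp
  next
    case rise
    then obtain t where "g j - int i = int N * t" by (rule dvdE)
    then have t: "g j = int i + t * int N" by (simp add: algebra_simps)
    have "w (g j) < w (g j + 1)"
      using ascent skew_periodic_add_mult[OF per, of "int i" t]
        skew_periodic_add_mult[OF per, of "int i + 1" t] t by (simp add: algebra_simps)
    moreover have "\<not> int N dvd g j - int i - 1" using not_dvd_both[OF N rise] by blast
    then have "s_gen N i (f_gen N i (g j)) = g j + 1" using rise by (simp add: f_gen_eq s_gen_eq)
    ultimately show ?thesis using above by simp
  next
    case other
    then show ?thesis using above by (simp add: f_gen_eq s_gen_eq)
  qed
qed

lemma hecke_image_comp_s_gen:
  assumes N: "N \<ge> 2" and per: "skew_periodic N w"
    and ascent: "w (int i) < w (int i + 1)" and g: "hecke_image w g"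
  shows "hecke_image (w \<circ> s_gen N i) (f_gen N i \<circ> g)"
proof -
  have "mono (f_gen N i \<circ> g)" using g mono_f_gen unfolding hecke_image_def by (simp add: mono_def)
  then show ?thesis unfolding hecke_image_def
    using hecke_image_comp_s_gen_below[OF g] hecke_image_comp_s_gen_above[OF assms] by simp
qed

lemma word_perm_snoc: "word_perm N (ws @ [i]) = word_perm N ws \<circ> s_gen N i"
proof -
  have "foldr (\<lambda>i acc. s_gen N i \<circ> acc) xs v = foldr (\<lambda>i acc. s_gen N i \<circ> acc) xs id \<circ> v" for xs v
    by (induction xs) (auto simp: comp_assoc)
  then show ?thesis unfolding word_perm_def by simp
qed

lemma word_perm_Nil: "word_perm N [] = id"
  unfolding word_perm_def by (simp add: id_def)

lemma word_f_Nil: "word_f N [] = id"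
  unfolding word_f_def by simp

lemma word_f_snoc: "word_f N (ws @ [i]) = f_gen N i \<circ> word_f N ws"
  unfolding word_f_def by simp

lemma word_perm_in_affS:
  assumes "N \<ge> 2"
  shows "word_perm N ws \<in> affS N"
proof (induction ws rule: rev_induct)
  case Nil show ?case unfolding word_perm_Nil by (rule id_in_affS)
next
  case (snoc i ws)
  then show ?case unfolding word_perm_snoc by (rule affS_comp_s_gen[OF assms])
qed

lemma inv_count_word_perm_le:
  assumes N: "N \<ge> 2"
  shows "inv_count N (word_perm N ws) \<le> length ws"
proof (induction ws rule: rev_induct)
  case Nil show ?case unfolding word_perm_Nil inv_count_id by simp
next
  case (snoc i ws)
  let ?w = "word_perm N ws"
  have "bij ?w" and per: "skew_periodic N ?w" using word_perm_in_affS[OF N] unfolding affS_iff by auto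
  have "int (inv_count N (?w \<circ> s_gen N i)) \<le> int (inv_count N ?w) + 1"
    using inv_count_comp_s_gen[OF N per bij_is_inj[OF \<open>bij ?w\<close>]] by simp
  moreover have "length (ws @ [i]) = length ws + 1" by simp
  ultimately show ?case using snoc.IH unfolding word_perm_snoc by linarith
qed

text \<open>A word of length \<open>inv_count\<close> only ever multiplies by \<open>s_i\<close> at an ascent, which is
  exactly when \<open>\<pi>_i\<close> acts as \<open>f_i\<close> on the Hecke image.\<close>

lemma hecke_image_word_perm:
  assumes N: "N \<ge> 2" and "inv_count N (word_perm N ws) = length ws"
  shows "hecke_image (word_perm N ws) (word_f N ws)"
  using assms(2)
proof (induction ws rule: rev_induct)
  case Nil show ?case unfolding word_perm_Nil word_f_Nil by (rule hecke_image_id)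
next
  case (snoc i ws)
  let ?w = "word_perm N ws"
  have "bij ?w" and per: "skew_periodic N ?w" using word_perm_in_affS[OF N] unfolding affS_iff by auto
  note step = inv_count_comp_s_gen[OF N per bij_is_inj[OF \<open>bij ?w\<close>]]
  have le: "inv_count N ?w \<le> length ws" by (rule inv_count_word_perm_le[OF N])
  have "int (inv_count N (?w \<circ> s_gen N i)) = int (length ws) + 1"
    using snoc.prems unfolding word_perm_snoc length_append_singleton by linarith
  then have ascent: "?w (int i) < ?w (int i + 1)" and "inv_count N ?w = length ws"
    using step le by (auto split: if_splits)
  from \<open>inv_count N ?w = length ws\<close> have "hecke_image ?w (word_f N ws)" by (rule snoc.IH)
  then show ?case unfolding word_perm_snoc word_f_snoc by (rule hecke_image_comp_s_gen[OF N per ascent])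
qed

lemma inv_count_comp_s_gen_descent:
  assumes N: "N \<ge> 2" and w: "w \<in> affS N" and descent: "w (int i + 1) < w (int i)"
  shows "inv_count N (w \<circ> s_gen N i) + 1 = inv_count N w"
proof -
  have "bij w" "skew_periodic N w" using w unfolding affS_iff by auto
  then have "int (inv_count N (w \<circ> s_gen N i)) = int (inv_count N w) - 1"
    using inv_count_comp_s_gen[OF N _ bij_is_inj] descent by simp
  then show ?thesis by linarith
qed

lemma exists_word_inv_count:
  assumes N: "N \<ge> 2" and "w \<in> affS N"
  shows "\<exists>ws. set ws \<subseteq> {..<N} \<and> word_perm N ws = w \<and> length ws = inv_count N w"
  using assms(2)
proof (induction "inv_count N w" arbitrary: w)
  case 0
  have "w = id"
  proof (rule ccontr)
    assume "w \<noteq> id"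
    then obtain i where "w (int i + 1) < w (int i)" using affS_descent[OF _ "0.prems"] N by auto
    then show False using inv_count_comp_s_gen_descent[OF N "0.prems"] "0.hyps" by simp
  qed
  then show ?case using "0.hyps" by (intro exI[of _ "[]"]) (simp add: word_perm_Nil)
next
  case (Suc k)
  have "w \<noteq> id" using Suc.hyps(2) inv_count_id[of N] by auto
  then obtain i where i: "i < N" "w (int i + 1) < w (int i)" using affS_descent[OF _ Suc.prems] N by auto
  then have "k = inv_count N (w \<circ> s_gen N i)"
    using inv_count_comp_s_gen_descent[OF N Suc.prems i(2)] Suc.hyps(2) by simp
  then obtain ws where ws: "set ws \<subseteq> {..<N}" "word_perm N ws = w \<circ> s_gen N i" "length ws = k"
    using Suc.hyps(1) affS_comp_s_gen[OF N Suc.prems] by blast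
  have "word_perm N (ws @ [i]) = w"
    unfolding word_perm_snoc ws(2) using s_gen_s_gen[OF N] by (simp add: fun_eq_iff)
  then show ?case using ws i(1) Suc.hyps(2) by (intro exI[of _ "ws @ [i]"]) simp
qed

lemma aff_length_eq_inv_count:
  assumes N: "N \<ge> 2" and w: "w \<in> affS N"
  shows "aff_length N w = inv_count N w"
  unfolding aff_length_def
proof (rule Least_equality)
  show "\<exists>ws. length ws = inv_count N w \<and> set ws \<subseteq> {..<N} \<and> word_perm N ws = w"
    using exists_word_inv_count[OF N w] by blast
next
  fix k assume "\<exists>ws. length ws = k \<and> set ws \<subseteq> {..<N} \<and> word_perm N ws = w"
  then obtain ws where "length ws = k" "set ws \<subseteq> {..<N}" "word_perm N ws = w" by blast
  then show "inv_count N w \<le> k" using inv_count_word_perm_le[OF N] by blast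
qed

lemma P_hecke_iff:
  assumes N: "N \<ge> 2" and w: "w \<in> affS N"
  shows "P_hecke N w = g \<longleftrightarrow> hecke_image w g"
proof -
  obtain ws where "set ws \<subseteq> {..<N}" "word_perm N ws = w" "length ws = inv_count N w"
    using exists_word_inv_count[OF N w] by blast
  then have "reduced_word N w ws"
    unfolding reduced_word_def aff_length_eq_inv_count[OF N w] by simp
  define rw where "rw = (SOME ws. reduced_word N w ws)"
  have "reduced_word N w rw" unfolding rw_def by (rule someI) fact
  then have rw: "word_perm N rw = w" "length rw = inv_count N w"
    unfolding reduced_word_def aff_length_eq_inv_count[OF N w] by auto
  have "hecke_image w (P_hecke N w)"
    using hecke_image_word_perm[OF N, of rw] rw unfolding P_hecke_def rw_def[symmetric] by simp
  then show ?thesis using hecke_image_unique by auto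
qed

section \<open>Uniqueness of the 321-avoiding element\<close>

definition ascents :: "(int \<Rightarrow> int) \<Rightarrow> int set" where
  "ascents g = {j. g j < g (j + 1)}"

lemma hecke_image_ascent:
  assumes "hecke_image w g" "j \<in> ascents g"
  shows "w (g j) = j"
proof -
  have "mono g" "j \<le> w (g j)" "g (w (g j)) \<le> g j" using assms(1) unfolding hecke_image_def by auto
  moreover have "\<not> j + 1 \<le> w (g j)"
  proof
    assume "j + 1 \<le> w (g j)"
    then have "g (j + 1) \<le> g (w (g j))" by (rule monoD[OF \<open>mono g\<close>])
    then show False using \<open>g (w (g j)) \<le> g j\<close> assms(2) unfolding ascents_def by simp
  qed
  ultimately show ?thesis by simp
qed

lemma hecke_image_not_ascent:
  assumes "hecke_image w g" "inj w" "p \<notin> g ` ascents g"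
  shows "w p \<notin> ascents g"
proof
  assume "w p \<in> ascents g"
  then have "w (g (w p)) = w p" by (rule hecke_image_ascent[OF assms(1)])
  then have "g (w p) = p" using assms(2) by (simp add: inj_eq)
  then show False using assms(3) \<open>w p \<in> ascents g\<close> by force
qed

lemma hecke_image_larger_before:
  assumes "hecke_image w g" "inj w" "w p \<notin> ascents g"
  shows "\<exists>c<p. w p < w c"
proof -
  have "mono g" and below: "g (w p) \<le> p" and above: "\<And>j. j \<le> w (g j)"
    using assms(1) unfolding hecke_image_def by auto
  have "g (w p) \<le> g (w p + 1)" using \<open>mono g\<close> by (rule monoD) simp
  then have flat: "g (w p + 1) = g (w p)" using assms(3) unfolding ascents_def by simp
  have "g (w p) \<noteq> p" using above[of "w p + 1"] flat by auto
  moreover have "w (g (w p)) \<noteq> w p" using \<open>g (w p) \<noteq> p\<close> assms(2) by (simp add: inj_eq)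
  ultimately show ?thesis using below above[of "w p"] by (intro exI[of _ "g (w p)"]) auto
qed

lemma hecke_image_increasing_off_image:
  assumes "hecke_image w g" "inj w" "avoids321 w" "a < b"
    "a \<notin> g ` ascents g" "b \<notin> g ` ascents g"
  shows "w a < w b"
proof -
  obtain c where "c < a" "w a < w c"
    using hecke_image_larger_before[OF assms(1,2) hecke_image_not_ascent[OF assms(1,2,5)]] by blast
  then have "\<not> w b < w a" using assms(3,4) unfolding avoids321_def by blast
  moreover have "w a \<noteq> w b" using assms(2,4) by (auto simp: inj_eq)
  ultimately show ?thesis by simp
qed

lemma hecke_image_onto_non_ascents:
  assumes "hecke_image w g" "surj w" "x \<notin> ascents g"
  obtains p where "p \<notin> g ` ascents g" "w p = x"
proof -
  obtain p where p: "x = w p" using surjD[OF assms(2)] by blast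
  moreover have "p \<notin> g ` ascents g" using hecke_image_ascent[OF assms(1)] assms(3) p by auto
  ultimately show ?thesis using that by blast
qed

lemma hecke_image_interval:
  assumes w: "hecke_image w g" "bij w" "avoids321 w"
    and q: "q \<le> q'" "q \<notin> g ` ascents g" "q' \<notin> g ` ascents g"
  shows "w ` (- g ` ascents g \<inter> {q..q'}) = - ascents g \<inter> {w q..w q'}"
proof (rule set_eqI, rule iffI)
  have "inj w" using w(2) by (rule bij_is_inj)
  note incr = hecke_image_increasing_off_image[OF w(1) \<open>inj w\<close> w(3)]
  {
    fix x assume "x \<in> w ` (- g ` ascents g \<inter> {q..q'})"
    then obtain p where p: "p \<notin> g ` ascents g" "q \<le> p" "p \<le> q'" "x = w p" by auto
    have "w q \<le> w p" "w p \<le> w q'" using incr[of q p] incr[of p q'] p q by (cases "q = p"; cases "p = q'"; auto)+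
    then show "x \<in> - ascents g \<inter> {w q..w q'}"
      using hecke_image_not_ascent[OF w(1) \<open>inj w\<close> p(1)] p(4) by auto
  next
    fix x assume x: "x \<in> - ascents g \<inter> {w q..w q'}"
    then obtain p where p: "p \<notin> g ` ascents g" "w p = x"
      using hecke_image_onto_non_ascents[OF w(1) bij_is_surj[OF w(2)]] by auto
    have "\<not> p < q" "\<not> q' < p" using incr[of p q] incr[of q' p] p q x by auto
    then show "x \<in> w ` (- g ` ascents g \<inter> {q..q'})" using p by auto
  }
qed

lemma no_crossing:
  assumes w: "hecke_image w g" "bij w" "avoids321 w" and w': "hecke_image w' g" "bij w'" "avoids321 w'"
    and q: "q < q'" "q \<notin> g ` ascents g" "q' \<notin> g ` ascents g" "w q < w' q" "w' q' < w q'"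
  shows False
proof -
  let ?I = "- g ` ascents g \<inter> {q..q'}"
  have "w' ` ?I \<subseteq> w ` ?I - {w q}"
    unfolding hecke_image_interval[OF w less_imp_le[OF q(1)] q(2,3)]
      hecke_image_interval[OF w' less_imp_le[OF q(1)] q(2,3)] using q by auto
  moreover have "w q \<in> w ` ?I" using q by auto
  ultimately have "w' ` ?I \<subset> w ` ?I" by blast
  then have "card (w' ` ?I) < card (w ` ?I)" by (intro psubset_card_mono) auto
  moreover have "card (w ` ?I) = card ?I" "card (w' ` ?I) = card ?I"
    using bij_is_inj[OF w(2)] bij_is_inj[OF w'(2)] by (auto intro: card_image inj_on_subset)
  ultimately show False by simp
qed

lemma affS_eq_if_le:
  assumes "w \<in> affS N" "w' \<in> affS N" "N > 0" "\<And>k. w k \<le> w' k"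
  shows "w = w'"
proof -
  have per: "skew_periodic N w" "skew_periodic N w'"
    and sums: "(\<Sum>k\<in>{1..int N}. w k - k) = 0" "(\<Sum>k\<in>{1..int N}. w' k - k) = 0"
    using assms(1,2) unfolding affS_iff by auto
  have "(\<Sum>k\<in>{1..int N}. w' k - w k) = (\<Sum>k\<in>{1..int N}. w' k - k) - (\<Sum>k\<in>{1..int N}. w k - k)"
    by (simp add: sum_subtractf[symmetric])
  then have "(\<Sum>k\<in>{1..int N}. w' k - w k) = 0" using sums by simp
  then have "\<forall>k\<in>{1..int N}. w' k - w k = 0" using assms(4) by (simp add: sum_nonneg_eq_0_iff)
  then show ?thesis using skew_periodic_eqI[OF per assms(3)] by simp
qed

lemma unique_avoids321_hecke_image:
  assumes N: "N > 0"
    and w: "w \<in> affS N" "hecke_image w g" "avoids321 w"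
    and w': "w' \<in> affS N" "hecke_image w' g" "avoids321 w'"
  shows "w = w'"
proof (rule ccontr)
  assume "w \<noteq> w'"
  then have "\<not> (\<forall>k. w k \<le> w' k)" "\<not> (\<forall>k. w' k \<le> w k)"
    using affS_eq_if_le[OF w(1) w'(1) N] affS_eq_if_le[OF w'(1) w(1) N] by auto
  then obtain q q' where q: "w q < w' q" "w' q' < w q'" by (auto simp: not_le)
  have "bij w" "bij w'" using w(1) w'(1) unfolding affS_iff by auto
  have "q \<notin> g ` ascents g" "q' \<notin> g ` ascents g"
    using q hecke_image_ascent[OF w(2)] hecke_image_ascent[OF w'(2)] by force+
  moreover have "q \<noteq> q'" using q by auto
  ultimately show False
    using no_crossing[OF w(2) \<open>bij w\<close> w(3) w'(2) \<open>bij w'\<close> w'(3) _ _ _ q]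
      no_crossing[OF w'(2) \<open>bij w'\<close> w'(3) w(2) \<open>bij w\<close> w(3) _ _ _ q(2,1)]
    by (cases "q < q'") auto
qed

section \<open>Rank functions of sets of integers\<close>

lemma int_crossing:
  fixes a b :: int
  assumes "a \<le> b" "\<not> P a" "P b"
  obtains m where "\<not> P m" "P (m + 1)"
proof -
  define d where "d = (LEAST d. P (a + int d))"
  have "P (a + int (nat (b - a)))" using assms by simp
  then have "P (a + int d)" unfolding d_def by (rule LeastI)
  moreover have "d \<noteq> 0" using assms(2) \<open>P (a + int d)\<close> by (intro notI) simp
  moreover have "\<not> P (a + int (d - 1))"
    unfolding d_def by (rule not_less_Least[where P = "\<lambda>d. P (a + int d)"]) (use \<open>d \<noteq> 0\<close> d_def in simp)
  moreover have "a + int (d - 1) + 1 = a + int d" using \<open>d \<noteq> 0\<close> by simp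
  ultimately show ?thesis using that[of "a + int (d - 1)"] by simp
qed

text \<open>\<open>rank S x\<close> counts the elements of \<open>S\<close> in \<open>(0, x]\<close>, negatively when \<open>x < 0\<close>,
  so that \<open>rank S y - rank S x = card (S \<inter> {x<..y})\<close> for \<open>x \<le> y\<close>.\<close>

definition rank :: "int set \<Rightarrow> int \<Rightarrow> int" where
  "rank S x = int (card (S \<inter> {1..x})) - int (card (S \<inter> {x + 1..0}))"

lemma rank_0 [simp]: "rank S 0 = 0"
  unfolding rank_def by simp

lemma rank_succ: "rank S (x + 1) = rank S x + (if x + 1 \<in> S then 1 else 0)"
proof (cases "x \<ge> 0")
  case True
  then have "{1..x + 1} = insert (x + 1) {1..x}" "{x + 1..0} = {}" "{x + 1 + 1..0} = {}" by auto
  then show ?thesis unfolding rank_def by (simp add: Int_insert_left card_insert_if)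
next
  case False
  then have "{1..x + 1} = {}" "{1..x} = {}" "{x + 1..0} = insert (x + 1) {x + 1 + 1..0}" by auto
  then show ?thesis unfolding rank_def by (simp add: Int_insert_left card_insert_if)
qed

lemma rank_diff:
  assumes "x \<le> y"
  shows "rank S y - rank S x = int (card (S \<inter> {x<..y}))"
proof -
  have "rank S (x + int d) - rank S x = int (card (S \<inter> {x<..x + int d}))" for d
  proof (induction d)
    case (Suc d)
    have "{x<..x + int (Suc d)} = insert (x + int d + 1) {x<..x + int d}" by auto
    then show ?case using Suc rank_succ[of S "x + int d"]
      by (simp add: Int_insert_left card_insert_if algebra_simps)
  qed simp
  from this[of "nat (y - x)"] show ?thesis using assms by simp
qed

lemma rank_mono: "x \<le> y \<Longrightarrow> rank S x \<le> rank S y"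
  using rank_diff[of x y S] by simp

lemma rank_strict_mono:
  assumes "x < y" "y \<in> S"
  shows "rank S x < rank S y"
proof -
  have "S \<inter> {x<..y} \<noteq> {}" using assms by auto
  then have "card (S \<inter> {x<..y}) > 0" by (simp add: card_gt_0_iff)
  then show ?thesis using rank_diff[of x y S] assms by simp
qed

lemma rank_le_iff: "u \<in> S \<Longrightarrow> u \<le> x \<longleftrightarrow> rank S u \<le> rank S x"
  using rank_mono[of u x S] rank_strict_mono[of x u S] by force

lemma rank_inj: "u \<in> S \<Longrightarrow> v \<in> S \<Longrightarrow> rank S u = rank S v \<Longrightarrow> u = v"
  using rank_le_iff[of u S v] rank_le_iff[of v S u] by simp

lemma rank_Compl: "rank S x + rank (- S) x = x"
proof (induction x rule: int_induct[where k = 0])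
  case (step1 x) then show ?case using rank_succ[of S x] rank_succ[of "- S" x] by simp
next
  case (step2 x)
  then show ?case using rank_succ[of S "x - 1"] rank_succ[of "- S" "x - 1"] by (simp split: if_splits)
qed simp

lemma rank_nonpos: "x \<le> 0 \<Longrightarrow> rank S x \<le> 0"
  using rank_mono[of x 0 S] by simp

lemma rank_pos: "u \<in> S \<Longrightarrow> 0 < u \<Longrightarrow> 0 < rank S u"
  using rank_strict_mono[of 0 u S] by simp

definition periodic_set :: "nat \<Rightarrow> int set \<Rightarrow> bool" where
  "periodic_set N S \<longleftrightarrow> (\<forall>x. x + int N \<in> S \<longleftrightarrow> x \<in> S)"

lemma periodic_set_Compl: "periodic_set N S \<Longrightarrow> periodic_set N (- S)"
  unfolding periodic_set_def by auto

lemma periodic_set_add_mult: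
  assumes "periodic_set N S"
  shows "x + t * int N \<in> S \<longleftrightarrow> x \<in> S"
proof (induction t rule: int_induct[where k = 0])
  case (step1 t)
  then show ?case using assms[unfolded periodic_set_def, rule_format, of "x + t * int N"]
    by (simp add: algebra_simps)
next
  case (step2 t)
  then show ?case using assms[unfolded periodic_set_def, rule_format, of "x + (t - 1) * int N"]
    by (simp add: algebra_simps)
qed simp

lemma rank_periodic:
  assumes "periodic_set N S"
  shows "rank S (x + int N) = rank S x + rank S (int N)"
proof (induction x rule: int_induct[where k = 0])
  case (step1 x)
  then show ?case using rank_succ[of S x] rank_succ[of S "x + int N"]
      assms[unfolded periodic_set_def, rule_format, of "x + 1"] by (simp add: algebra_simps)
next
  case (step2 x)
  then show ?case using rank_succ[of S "x - 1"] rank_succ[of S "x - 1 + int N"]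
      assms[unfolded periodic_set_def, rule_format, of x] by (simp add: algebra_simps)
qed simp

lemma rank_periodic_mult:
  assumes "periodic_set N S"
  shows "rank S (t * int N) = t * rank S (int N)"
proof (induction t rule: int_induct[where k = 0])
  case (step1 t) then show ?case using rank_periodic[OF assms, of "t * int N"] by (simp add: algebra_simps)
next
  case (step2 t) then show ?case using rank_periodic[OF assms, of "(t - 1) * int N"] by (simp add: algebra_simps)
qed simp

lemma rank_period_pos:
  assumes "periodic_set N S" "N > 0" "u \<in> S"
  shows "rank S (int N) > 0"
proof -
  obtain k t where k: "k \<in> {1..int N}" and "u = k + t * int N" using window_decomp[OF assms(2)] .
  then have "k \<in> S" using periodic_set_add_mult[OF assms(1)] assms(3) by simp
  then have "0 < rank S k" using k by (intro rank_pos) auto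
  also have "\<dots> \<le> rank S (int N)" using k by (intro rank_mono) simp
  finally show ?thesis .
qed

lemma rank_surj:
  assumes "periodic_set N S" "rank S (int N) > 0"
  obtains u where "u \<in> S" "rank S u = n"
proof -
  let ?r = "rank S (int N)"
  have "rank S ((- \<bar>n\<bar> - 1) * int N) = (- \<bar>n\<bar> - 1) * ?r"
       "rank S (\<bar>n\<bar> * int N) = \<bar>n\<bar> * ?r"
    by (rule rank_periodic_mult[OF assms(1)])+
  moreover have "\<bar>n\<bar> + 1 \<le> (\<bar>n\<bar> + 1) * ?r" "\<bar>n\<bar> \<le> \<bar>n\<bar> * ?r"
    using assms(2) mult_left_mono[of 1 ?r] by (auto simp del: mult_left_mono)
  ultimately have "\<not> n \<le> rank S ((- \<bar>n\<bar> - 1) * int N)" "n \<le> rank S (\<bar>n\<bar> * int N)"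
    by (simp_all add: algebra_simps)
  moreover have "(- \<bar>n\<bar> - 1) * int N \<le> \<bar>n\<bar> * int N" by (intro mult_right_mono) auto
  ultimately obtain m where "\<not> n \<le> rank S m" "n \<le> rank S (m + 1)"
    using int_crossing[where P = "\<lambda>x. n \<le> rank S x"] by blast
  then show ?thesis using that[of "m + 1"] rank_succ[of S m] by (auto split: if_splits)
qed

section \<open>Window sums and crossings of \<open>0\<close>\<close>

lemma card_by_residue:
  assumes N: "N > 0" and "finite S"
  shows "card S = (\<Sum>k\<in>{1..int N}. card {t. k + t * int N \<in> S})"
proof -
  let ?f = "\<lambda>(k, t). k + t * int N" and ?W = "{1..int N}"
  have "bij_betw ?f (Sigma ?W (\<lambda>k. {t. k + t * int N \<in> S})) S"
  proof (rule bij_betw_imageI)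
    show "inj_on ?f (Sigma ?W (\<lambda>k. {t. k + t * int N \<in> S}))"
    proof (rule inj_onI, clarify)
      fix k t k' t'
      assume "k \<in> ?W" "k' \<in> ?W" and eq: "k + t * int N = k' + t' * int N"
      then have "t = t'" by (rule window_unique)
      then show "k = k' \<and> t = t'" using eq by simp
    qed
    show "?f ` Sigma ?W (\<lambda>k. {t. k + t * int N \<in> S}) = S"
    proof (rule set_eqI, rule iffI)
      fix a assume "a \<in> S"
      moreover obtain k t where "k \<in> ?W" "a = k + t * int N" using window_decomp[OF N] .
      ultimately show "a \<in> ?f ` Sigma ?W (\<lambda>k. {t. k + t * int N \<in> S})" by force
    qed auto
  qed
  then have "card S = card (Sigma ?W (\<lambda>k. {t. k + t * int N \<in> S}))"
    by (simp add: bij_betw_same_card)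
  also have "\<dots> = (\<Sum>k\<in>?W. card {t. k + t * int N \<in> S})"
  proof (rule card_SigmaI)
    show "\<forall>k\<in>?W. finite {t. k + t * int N \<in> S}"
    proof
      fix k
      have "inj (\<lambda>t. k + t * int N)" using N by (auto simp: inj_def)
      then show "finite {t. k + t * int N \<in> S}"
        using finite_vimageI[OF \<open>finite S\<close>] by (simp add: vimage_def)
    qed
  qed simp
  finally show ?thesis .
qed

lemma int_le_div_iff:
  fixes t y n :: int
  assumes "n > 0"
  shows "t \<le> y div n \<longleftrightarrow> t * n \<le> y"
proof
  assume "t \<le> y div n"
  then have "t * n \<le> y div n * n" using assms by (simp add: mult_right_mono)
  also have "\<dots> \<le> y" using assms minus_mod_eq_div_mult[of y n] pos_mod_sign[of n y] by linarith
  finally show "t * n \<le> y" .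
next
  assume "t * n \<le> y"
  then have "t * n div n \<le> y div n" using assms by (intro zdiv_mono1) auto
  then show "t \<le> y div n" using assms by simp
qed

lemma card_translates_crossing:
  fixes x n :: int
  assumes "n > 0"
  shows "int (card {t. t < 0 \<and> 0 < x + t * n}) - int (card {t. 0 \<le> t \<and> x + t * n \<le> 0})
           = (x - 1) div n"
proof -
  have up: "0 < x + t * n \<longleftrightarrow> - ((x - 1) div n) \<le> t" for t
    using int_le_div_iff[OF assms, of "- t" "x - 1"] by (auto simp: algebra_simps)
  have down: "x + t * n \<le> 0 \<longleftrightarrow> t \<le> (- x) div n" for t
    using int_le_div_iff[OF assms, of t "- x"] by (auto simp: algebra_simps)
  have "{t. t < 0 \<and> 0 < x + t * n} = {- ((x - 1) div n)..-1}"
    unfolding set_eq_iff mem_Collect_eq atLeastAtMost_iff up by auto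
  moreover have "{t. 0 \<le> t \<and> x + t * n \<le> 0} = {0..(- x) div n}"
    unfolding set_eq_iff mem_Collect_eq atLeastAtMost_iff down by blast
  moreover have "(- x) div n = - ((x - 1) div n) - 1"
  proof -
    have "- x = (n - (x - 1) mod n - 1) + (- ((x - 1) div n) - 1) * n"
      using div_mult_mod_eq[of "x - 1" n] by (simp add: algebra_simps)
    moreover have "0 \<le> n - (x - 1) mod n - 1" "n - (x - 1) mod n - 1 < n"
      using assms pos_mod_bound[of n "x - 1"] pos_mod_sign[of n "x - 1"] by linarith+
    ultimately show ?thesis using assms by (simp add: div_pos_pos_trivial)
  qed
  ultimately show ?thesis by simp
qed

lemma sum_residues_window:
  assumes N: "N > 0" and bij: "bij w" and per: "skew_periodic N w"
  shows "(\<Sum>k\<in>{1..int N}. (w k - 1) mod int N) = (\<Sum>k\<in>{1..int N}. k - 1)"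
proof -
  let ?W = "{1..int N}"
  define \<rho> where "\<rho> k = (w k - 1) mod int N + 1" for k
  have into: "\<rho> ` ?W \<subseteq> ?W" unfolding \<rho>_def using N by (auto simp: add1_zle_eq)
  have "inj_on \<rho> ?W"
  proof (rule inj_onI)
    fix k k' assume k: "k \<in> ?W" "k' \<in> ?W" "\<rho> k = \<rho> k'"
    then have "int N dvd (w k - 1) - (w k' - 1)" unfolding \<rho>_def by (simp add: mod_eq_dvd_iff)
    then obtain t where "w k - w k' = int N * t" by (auto elim: dvdE)
    then have "w k = w (k' + t * int N)" using skew_periodic_add_mult[OF per] by (simp add: algebra_simps)
    then have "k + 0 * int N = k' + t * int N" using bij_is_inj[OF bij] by (simp add: inj_eq)
    then show "k = k'" using window_unique[OF k(1,2)] by fastforce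
  qed
  then have "bij_betw \<rho> ?W ?W" using endo_inj_surj[OF _ into] by (simp add: bij_betw_def)
  then have "(\<Sum>k\<in>?W. \<rho> k - 1) = (\<Sum>k\<in>?W. k - 1)" by (rule sum.reindex_bij_betw)
  then show ?thesis unfolding \<rho>_def by simp
qed

definition upcrossings :: "(int \<Rightarrow> int) \<Rightarrow> int set" where
  "upcrossings w = {a. a \<le> 0 \<and> 0 < w a}"

definition downcrossings :: "(int \<Rightarrow> int) \<Rightarrow> int set" where
  "downcrossings w = {a. 0 < a \<and> w a \<le> 0}"

lemma finite_crossings:
  assumes "skew_periodic N w" "N > 0"
  shows "finite (upcrossings w)" "finite (downcrossings w)"
proof -
  obtain C where C: "\<And>x. \<bar>w x - x\<bar> \<le> C" using skew_periodic_bounded_displacement[OF assms] by blast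
  have "upcrossings w \<subseteq> {-C..0}"
  proof
    fix a assume "a \<in> upcrossings w"
    then show "a \<in> {-C..0}" using C[of a] unfolding upcrossings_def by auto
  qed
  then show "finite (upcrossings w)" by (rule finite_subset) simp
  have "downcrossings w \<subseteq> {1..C}"
  proof
    fix a assume "a \<in> downcrossings w"
    then show "a \<in> {1..C}" using C[of a] unfolding downcrossings_def by auto
  qed
  then show "finite (downcrossings w)" by (rule finite_subset) simp
qed

lemma window_sum_crossings:
  assumes N: "N > 0" and bij: "bij w" and per: "skew_periodic N w"
  shows "(\<Sum>k\<in>{1..int N}. w k - k)
           = int N * (int (card (upcrossings w)) - int (card (downcrossings w)))"
proof -
  let ?W = "{1..int N}"
  note fin = finite_crossings[OF per N]
  have translate: "w (k + t * int N) = w k + t * int N" for k t by (rule skew_periodic_add_mult[OF per])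
  have "card {t. k + t * int N \<in> upcrossings w} = card {t. t < 0 \<and> 0 < w k + t * int N}"
    and "card {t. k + t * int N \<in> downcrossings w} = card {t. 0 \<le> t \<and> w k + t * int N \<le> 0}"
    if "k \<in> ?W" for k
    using that window_translate_pos[OF that] unfolding upcrossings_def downcrossings_def
    by (simp_all add: translate not_less[symmetric])
  then have crossings:
    "int (card (upcrossings w)) - int (card (downcrossings w)) = (\<Sum>k\<in>?W. (w k - 1) div int N)"
    unfolding card_by_residue[OF N fin(1)] card_by_residue[OF N fin(2)]
    using card_translates_crossing[of "int N"] N by (simp add: sum_subtractf[symmetric])
  have "w k - k = int N * ((w k - 1) div int N) + ((w k - 1) mod int N) - (k - 1)" for k
    using div_mult_mod_eq[of "w k - 1" "int N"] by (simp add: algebra_simps)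
  then have "(\<Sum>k\<in>?W. w k - k)
      = (\<Sum>k\<in>?W. int N * ((w k - 1) div int N) + ((w k - 1) mod int N) - (k - 1))"
    by (rule sum.cong[OF refl])
  also have "\<dots> = int N * (\<Sum>k\<in>?W. (w k - 1) div int N)
      + (\<Sum>k\<in>?W. (w k - 1) mod int N) - (\<Sum>k\<in>?W. k - 1)"
    by (simp only: sum_subtractf sum.distrib sum_distrib_left)
  also have "\<dots> = int N * (int (card (upcrossings w)) - int (card (downcrossings w)))"
    using crossings sum_residues_window[OF N bij per] by simp
  finally show ?thesis .
qed

section \<open>Existence of the 321-avoiding element\<close>

locale regressive_map =
  fixes N :: nat and g :: "int \<Rightarrow> int"
  assumes N: "N \<ge> 2" and regressive: "\<And>i. g i \<le> i" and mono: "mono g"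
    and per: "skew_periodic N g" and not_all_ascents: "ascents g \<noteq> UNIV"
begin

abbreviation "V \<equiv> ascents g"
abbreviation "R \<equiv> g ` ascents g"
abbreviation "U \<equiv> - ascents g"
abbreviation "Q \<equiv> - g ` ascents g"

lemma N_pos: "N > 0"
  using N by simp

lemma g_mono: "x \<le> y \<Longrightarrow> g x \<le> g y"
  using mono by (rule monoD)

lemma g_skew: "g (x + int N) = g x + int N"
  using per unfolding skew_periodic_def by blast

lemma g_lower_bound: obtains C where "\<And>x. x - C \<le> g x"
proof -
  obtain C where C: "\<And>x. \<bar>g x - x\<bar> \<le> C" using skew_periodic_bounded_displacement[OF per N_pos] by blast
  have "x - C \<le> g x" for x using C[of x] by (simp add: abs_le_iff)
  then show ?thesis by (rule that)
qed

lemma crossing: obtains m where "g m \<le> p" "p < g (m + 1)"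
proof -
  obtain C where C: "\<And>x. x - C \<le> g x" using g_lower_bound by blast
  have "0 \<le> C" using C[of 0] regressive[of 0] by simp
  then have "p \<le> p + C + 1" by simp
  moreover have "\<not> p < g p" using regressive[of p] by simp
  moreover have "p < g (p + C + 1)" using C[of "p + C + 1"] by simp
  ultimately obtain m where "\<not> p < g m" "p < g (m + 1)"
    by (rule int_crossing[where P = "\<lambda>x. p < g x"])
  then have "g m \<le> p" "p < g (m + 1)" by simp_all
  then show ?thesis by (rule that)
qed

lemma crossing_ascent: "g m \<le> p \<Longrightarrow> p < g (m + 1) \<Longrightarrow> m \<in> V"
  unfolding ascents_def by simp

lemma crossing_le_iff:
  assumes "g m \<le> p" "p < g (m + 1)"
  shows "j \<le> m \<longleftrightarrow> g j \<le> p"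
proof
  assume "j \<le> m" then show "g j \<le> p" using g_mono[of j m] assms by simp
next
  assume "g j \<le> p"
  show "j \<le> m"
  proof (rule ccontr)
    assume "\<not> j \<le> m"
    then have "g (m + 1) \<le> g j" by (intro g_mono) simp
    then show False using \<open>g j \<le> p\<close> assms by simp
  qed
qed

lemma ascent_less:
  assumes "j \<in> V" "j < j'"
  shows "g j < g j'"
proof -
  have "g j < g (j + 1)" using assms(1) unfolding ascents_def by simp
  also have "\<dots> \<le> g j'" using assms(2) by (intro g_mono) simp
  finally show ?thesis .
qed

lemma inj_on_ascents: "inj_on g V"
  by (rule inj_onI) (metis ascent_less less_irrefl not_less_iff_gr_or_eq)

lemma periodic_ascents: "periodic_set N V"
  unfolding periodic_set_def ascents_def
proof
  fix x
  show "(x + int N \<in> {j. g j < g (j + 1)}) = (x \<in> {j. g j < g (j + 1)})"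
    using g_skew[of "x + 1"] g_skew[of x] by (simp add: algebra_simps)
qed

lemma periodic_image: "periodic_set N R"
  unfolding periodic_set_def
proof (intro allI iffI)
  have V: "j + int N \<in> V \<longleftrightarrow> j \<in> V" for j
    using periodic_ascents unfolding periodic_set_def by blast
  fix x
  {
    assume "x + int N \<in> R"
    then obtain j where "j \<in> V" "x + int N = g j" by blast
    moreover have "g (j - int N) = g j - int N" using g_skew[of "j - int N"] by simp
    ultimately show "x \<in> R" using V[of "j - int N"] by (intro image_eqI[of _ _ "j - int N"]) auto
  next
    assume "x \<in> R"
    then obtain j where "j \<in> V" "x = g j" by blast
    then show "x + int N \<in> R" using V[of j] g_skew[of j] by (intro image_eqI[of _ _ "j + int N"]) auto
  }
qed

definition crossing_ascents :: "int set" where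
  "crossing_ascents = {j \<in> V. g j \<le> 0 \<and> 0 < j}"

definition offset :: nat where
  "offset = card crossing_ascents"

lemma rank_image_crossing:
  assumes "g m \<le> p" "p < g (m + 1)"
  shows "rank R p = rank R (g (m + 1) - 1)"
proof -
  have "R \<inter> {p<..g (m + 1) - 1} = {}"
  proof (intro equals0I)
    fix x assume "x \<in> R \<inter> {p<..g (m + 1) - 1}"
    then obtain j where "j \<in> V" "x = g j" "p < g j" "g j < g (m + 1)" by auto
    then show False using crossing_le_iff[OF assms, of j] g_mono[of "m + 1" j] by simp
  qed
  then show ?thesis using rank_diff[of p "g (m + 1) - 1" R] assms by simp
qed

lemma rank_ascents_at_zero_crossing:
  assumes m: "g m \<le> 0" "0 < g (m + 1)"
  shows "rank V m = int offset"
proof (cases "0 \<le> m")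
  case True
  have "j \<in> crossing_ascents \<longleftrightarrow> j \<in> V \<inter> {0<..m}" for j
    using crossing_le_iff[OF m, of j] unfolding crossing_ascents_def by auto
  then have "crossing_ascents = V \<inter> {0<..m}" by blast
  then show ?thesis using rank_diff[OF True, of V] unfolding offset_def by simp
next
  case False
  have "V \<inter> {m<..0} = {}"
  proof (intro equals0I)
    fix j assume "j \<in> V \<inter> {m<..0}"
    then show False using crossing_le_iff[OF m, of j] regressive[of j] by auto
  qed
  moreover have "crossing_ascents = {}"
  proof (intro equals0I)
    fix j assume "j \<in> crossing_ascents"
    then show False using crossing_le_iff[OF m, of j] False unfolding crossing_ascents_def by auto
  qed
  ultimately show ?thesis using rank_diff[of m 0 V] False unfolding offset_def by simp
qed

text \<open>The difference \<open>rank V m - rank R p\<close> along the graph of \<open>g\<close> is constant; evaluating it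
  at the crossing of \<open>0\<close> identifies it as the number of ascents that \<open>g\<close> pulls across \<open>0\<close>.\<close>

lemma rank_ascents_minus_rank_image:
  assumes "g m \<le> p" "p < g (m + 1)"
  shows "rank V m - rank R p = int offset"
proof -
  define F where "F m = rank V m - rank R (g (m + 1) - 1)" for m
  have step: "F (m + 1) = F m" for m
  proof (cases "m + 1 \<in> V")
    case True
    then have "g (m + 1) < g (m + 1 + 1)" unfolding ascents_def by simp
    then have "rank R (g (m + 1 + 1) - 1) = rank R (g (m + 1))"
      using rank_image_crossing[of "m + 1" "g (m + 1)"] by simp
    also have "\<dots> = rank R (g (m + 1) - 1) + 1"
      using rank_succ[of R "g (m + 1) - 1"] True by simp
    finally show ?thesis using True unfolding F_def by (simp add: rank_succ)
  next
    case False
    then have "g (m + 1 + 1) = g (m + 1)" using g_mono[of "m + 1" "m + 1 + 1"] unfolding ascents_def by simp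
    then show ?thesis using False unfolding F_def by (simp add: rank_succ)
  qed
  obtain m0 where m0: "g m0 \<le> 0" "0 < g (m0 + 1)" using crossing by blast
  have "F m = F m0" for m
  proof (induction m rule: int_induct[where k = m0])
    case (step1 m) then show ?case using step[of m] by simp
  next
    case (step2 m) then show ?case using step[of "m - 1"] by simp
  qed simp
  moreover have "F m0 = int offset"
    using rank_ascents_at_zero_crossing[OF m0] rank_image_crossing[OF m0] unfolding F_def by simp
  ultimately show ?thesis using rank_image_crossing[OF assms] unfolding F_def by simp
qed

lemma rank_ascents_period: "rank V (int N) = rank R (int N)"
proof -
  obtain m where m: "g m \<le> 0" "0 < g (m + 1)" using crossing by blast
  then have "g (m + int N) \<le> 0 + int N" "0 + int N < g (m + int N + 1)"
    using g_skew[of m] g_skew[of "m + 1"] by (simp_all add: algebra_simps)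
  then have "rank V (m + int N) - rank R (0 + int N) = int offset"
    by (rule rank_ascents_minus_rank_image)
  moreover have "rank V m - rank R 0 = int offset" by (rule rank_ascents_minus_rank_image[OF m])
  ultimately have "rank V (m + int N) - rank R (0 + int N) = rank V m - rank R 0" by simp
  then show ?thesis using rank_periodic[OF periodic_ascents, of m] rank_periodic[OF periodic_image, of 0] by simp
qed

lemma rank_non_ascents_period: "rank Q (int N) = rank U (int N)" "rank U (int N) > 0"
proof -
  show "rank Q (int N) = rank U (int N)"
    using rank_Compl[of V "int N"] rank_Compl[of R "int N"] rank_ascents_period by simp
  obtain u where "u \<in> U" using not_all_ascents by blast
  then show "rank U (int N) > 0" by (rule rank_period_pos[OF periodic_set_Compl[OF periodic_ascents] N_pos])
qed

text \<open>Off the image of \<open>g\<close> the constructed permutation is the increasing bijection \<open>Q \<rightarrow> U\<close>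
  that shifts ranks by \<open>offset\<close>; this choice of shift is what makes the window sum vanish.\<close>

definition complement_map :: "int \<Rightarrow> int" where
  "complement_map q = (THE u. u \<in> U \<and> rank U u = rank Q q - int offset)"

lemma complement_map:
  "complement_map q \<in> U" "rank U (complement_map q) = rank Q q - int offset"
proof -
  obtain u where u: "u \<in> U" "rank U u = rank Q q - int offset"
    using rank_surj[OF periodic_set_Compl[OF periodic_ascents] rank_non_ascents_period(2)] by blast
  have "v = u" if "v \<in> U" "rank U v = rank Q q - int offset" for v
    using rank_inj[OF that(1) u(1)] that(2) u(2) by simp
  then have "\<exists>!u. u \<in> U \<and> rank U u = rank Q q - int offset" using u by blast
  then have "complement_map q \<in> U \<and> rank U (complement_map q) = rank Q q - int offset"
    unfolding complement_map_def by (rule theI')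
  then show "complement_map q \<in> U" "rank U (complement_map q) = rank Q q - int offset" by auto
qed

lemma complement_mapI: "u \<in> U \<Longrightarrow> rank U u = rank Q q - int offset \<Longrightarrow> complement_map q = u"
  using complement_map[of q] rank_inj[of "complement_map q" U u] by simp

definition wg :: "int \<Rightarrow> int" where
  "wg x = (if x \<in> R then the_inv_into V g x else complement_map x)"

lemma wg_image: "j \<in> V \<Longrightarrow> wg (g j) = j"
  unfolding wg_def using the_inv_into_f_f[OF inj_on_ascents] by auto

lemma wg_off_image: "q \<notin> R \<Longrightarrow> wg q = complement_map q"
  unfolding wg_def by simp

lemma less_off_image:
  assumes "q \<notin> R"
  shows "g q < q"
proof (rule ccontr)
  assume "\<not> g q < q"
  then have gq: "g q = q" using regressive[of q] by simp
  obtain m where m: "g m \<le> q" "q < g (m + 1)" using crossing by blast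
  have "q \<le> m" using crossing_le_iff[OF m, of q] gq by simp
  then have "g m = q" using g_mono[of q m] m gq by simp
  then show False using crossing_ascent[OF m] assms by blast
qed

lemma g_complement_map_less:
  assumes "q \<notin> R"
  shows "g (complement_map q) < q"
proof -
  obtain m where m: "g m \<le> q - 1" "q - 1 < g (m + 1)" using crossing by blast
  have "g q \<le> q - 1" using less_off_image[OF assms] by simp
  then have "q \<le> m" using crossing_le_iff[OF m, of q] by simp
  have "rank R q = rank R (q - 1)" using rank_succ[of R "q - 1"] assms by simp
  then have "rank U (complement_map q) = rank U m + (q - m)"
    using complement_map(2)[of q] rank_ascents_minus_rank_image[OF m]
      rank_Compl[of R q] rank_Compl[of V m] by linarith
  then have "rank U (complement_map q) \<le> rank U m" using \<open>q \<le> m\<close> by simp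
  then have "complement_map q \<le> m" using rank_le_iff[OF complement_map(1)] by simp
  then show ?thesis using g_mono[of "complement_map q" m] m by simp
qed

lemma wg_skew_periodic: "skew_periodic N wg"
  unfolding skew_periodic_def
proof
  fix x
  have R: "x + int N \<in> R \<longleftrightarrow> x \<in> R" using periodic_image unfolding periodic_set_def by blast
  show "wg (x + int N) = wg x + int N"
  proof (cases "x \<in> R")
    case True
    then obtain j where j: "j \<in> V" "x = g j" by blast
    then have "j + int N \<in> V" using periodic_ascents unfolding periodic_set_def by blast
    moreover have "x + int N = g (j + int N)" using j g_skew by simp
    ultimately show ?thesis using wg_image j by simp
  next
    case False
    have U: "periodic_set N U" and Q: "periodic_set N Q"
      using periodic_set_Compl periodic_ascents periodic_image by blast+
    have "complement_map x + int N \<in> U"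
      using U complement_map(1)[of x] unfolding periodic_set_def by blast
    moreover have "rank U (complement_map x + int N) = rank Q (x + int N) - int offset"
      using rank_periodic[OF U, of "complement_map x"] rank_periodic[OF Q, of x]
        complement_map(2)[of x] rank_non_ascents_period(1) by simp
    ultimately have "complement_map (x + int N) = complement_map x + int N" by (rule complement_mapI)
    then show ?thesis using wg_off_image False R by simp
  qed
qed

lemma inj_wg: "inj wg"
proof (rule injI)
  fix x y assume eq: "wg x = wg y"
  have in_V: "wg z \<in> V \<longleftrightarrow> z \<in> R" for z
  proof (cases "z \<in> R")
    case True
    then obtain j where "j \<in> V" "z = g j" by blast
    then show ?thesis using wg_image by simp
  next
    case False
    then show ?thesis using complement_map(1)[of z] wg_off_image[OF False] by simp
  qed
  then have "x \<in> R \<longleftrightarrow> y \<in> R" using in_V[of x] in_V[of y] eq by simp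
  then consider "x \<in> R" "y \<in> R" | "x \<notin> R" "y \<notin> R" by blast
  then show "x = y"
  proof cases
    case 1
    then obtain j j' where "j \<in> V" "x = g j" "j' \<in> V" "y = g j'" by blast
    then show ?thesis using eq wg_image by simp
  next
    case 2
    then have "rank Q x = rank Q y"
      using eq complement_map(2)[of x] complement_map(2)[of y] wg_off_image[OF 2(1)] wg_off_image[OF 2(2)]
      by simp
    then show ?thesis using rank_inj[of x Q y] 2 by simp
  qed
qed

lemma rank_off_image_period_pos: "rank Q (int N) > 0"
  using rank_non_ascents_period by simp

lemma surj_wg: "surj wg"
proof -
  have "y \<in> range wg" for y
  proof (cases "y \<in> V")
    case True
    then have "y = wg (g y)" using wg_image by simp
    then show ?thesis by (rule range_eqI)
  next
    case False
    obtain q where q: "q \<in> Q" "rank Q q = rank U y + int offset"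
      using rank_surj[OF periodic_set_Compl[OF periodic_image] rank_off_image_period_pos] by blast
    have "complement_map q = y" by (rule complement_mapI) (use False q in auto)
    then have "y = wg q" using wg_off_image q(1) by simp
    then show ?thesis by (rule range_eqI)
  qed
  then show ?thesis by blast
qed

lemma hecke_image_wg: "hecke_image wg g"
  unfolding hecke_image_def
proof (intro conjI allI)
  show "mono g" by (rule mono)
next
  fix p show "g (wg p) \<le> p"
  proof (cases "p \<in> R")
    case True then obtain j where "j \<in> V" "p = g j" by blast
    then show ?thesis using wg_image by simp
  next
    case False then show ?thesis using wg_off_image g_complement_map_less[OF False] by simp
  qed
next
  fix j
  obtain m where m: "g m \<le> g j" "g j < g (m + 1)" using crossing by blast
  have "j \<le> m" using crossing_le_iff[OF m, of j] by simp
  then have "g m = g j" using g_mono[of j m] m by simp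
  then have "wg (g j) = m" using wg_image[OF crossing_ascent[OF m]] by simp
  then show "j \<le> wg (g j)" using \<open>j \<le> m\<close> by simp
qed

lemma inversion_off_image:
  assumes "a < b" "wg b < wg a"
  shows "b \<notin> R"
proof
  assume "b \<in> R"
  then obtain j where j: "j \<in> V" "b = g j" by blast
  then have "wg b = j" using wg_image by simp
  then have "g (j + 1) \<le> g (wg a)" using assms(2) by (intro g_mono) simp
  also have "\<dots> \<le> a" using hecke_image_wg unfolding hecke_image_def by blast
  finally show False using j assms(1) unfolding ascents_def by simp
qed

lemma avoids321_wg: "avoids321 wg"
  unfolding avoids321_def
proof clarify
  fix a b c assume h: "a < b" "b < c" "wg b < wg a" "wg c < wg b"
  have "b \<notin> R" "c \<notin> R" using inversion_off_image h by blast+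
  then have "rank U (wg b) < rank U (wg c)"
    using rank_strict_mono[of b c Q] h(2) complement_map(2) wg_off_image by simp
  then have "wg b < wg c" using rank_le_iff[of "wg c" U "wg b"] complement_map(1) wg_off_image \<open>c \<notin> R\<close>
    by force
  then show False using h(4) by simp
qed

lemma upcrossings_wg: "upcrossings wg = g ` crossing_ascents"
proof (rule set_eqI, rule iffI)
  fix x assume x: "x \<in> upcrossings wg"
  show "x \<in> g ` crossing_ascents"
  proof (cases "x \<in> R")
    case True
    then obtain j where j: "j \<in> V" "x = g j" by blast
    then have "j \<in> crossing_ascents" using x wg_image unfolding upcrossings_def crossing_ascents_def by simp
    then show ?thesis using j by blast
  next
    case False
    have "rank U (wg x) \<le> 0"
      using x complement_map(2)[of x] wg_off_image[OF False] rank_nonpos[of x Q]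
      unfolding upcrossings_def by simp
    moreover have "0 < rank U (wg x)"
      using x rank_pos[of "wg x" U] complement_map(1) wg_off_image[OF False] unfolding upcrossings_def by simp
    ultimately show ?thesis by simp
  qed
next
  fix x assume "x \<in> g ` crossing_ascents"
  then obtain j where "j \<in> crossing_ascents" "x = g j" by blast
  then show "x \<in> upcrossings wg" using wg_image unfolding upcrossings_def crossing_ascents_def by simp
qed

lemma downcrossings_wg: "downcrossings wg = {q \<in> Q. 1 \<le> rank Q q \<and> rank Q q \<le> int offset}"
proof (rule set_eqI, rule iffI)
  fix x assume x: "x \<in> downcrossings wg"
  have "x \<notin> R"
  proof
    assume "x \<in> R"
    then obtain j where "j \<in> V" "x = g j" by blast
    then show False using x wg_image regressive[of j] unfolding downcrossings_def by simp
  qed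
  moreover have "0 < rank Q x" using rank_pos[of x Q] x \<open>x \<notin> R\<close> unfolding downcrossings_def by simp
  moreover have "rank U (wg x) \<le> 0"
    using rank_nonpos[of "wg x" U] x unfolding downcrossings_def by simp
  then have "rank Q x \<le> int offset" using complement_map(2)[of x] wg_off_image[OF \<open>x \<notin> R\<close>] by simp
  ultimately show "x \<in> {q \<in> Q. 1 \<le> rank Q q \<and> rank Q q \<le> int offset}" by simp
next
  fix x assume x: "x \<in> {q \<in> Q. 1 \<le> rank Q q \<and> rank Q q \<le> int offset}"
  then have "0 < x" using rank_nonpos[of x Q] by (cases "0 < x") auto
  have "x \<notin> R" using x by simp
  have "rank U (wg x) \<le> rank U 0"
    using complement_map(2)[of x] wg_off_image[OF \<open>x \<notin> R\<close>] x by simp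
  then have "wg x \<le> 0" using rank_le_iff[of "wg x" U 0] complement_map(1) wg_off_image[OF \<open>x \<notin> R\<close>] by simp
  then show "x \<in> downcrossings wg" using \<open>0 < x\<close> unfolding downcrossings_def by simp
qed

lemma card_downcrossings_wg: "card (downcrossings wg) = offset"
proof -
  let ?S = "{q \<in> Q. 1 \<le> rank Q q \<and> rank Q q \<le> int offset}"
  have "bij_betw (rank Q) ?S {1..int offset}"
  proof (rule bij_betw_imageI)
    show "inj_on (rank Q) ?S" by (rule inj_onI) (use rank_inj[of _ Q] in blast)
    show "rank Q ` ?S = {1..int offset}"
    proof (rule set_eqI, rule iffI)
      fix n assume n: "n \<in> {1..int offset}"
      obtain q where "q \<in> Q" "rank Q q = n"
        using rank_surj[OF periodic_set_Compl[OF periodic_image] rank_off_image_period_pos] by blast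
      then show "n \<in> rank Q ` ?S" using n by force
    qed auto
  qed
  then show ?thesis unfolding downcrossings_wg by (simp add: bij_betw_same_card)
qed

lemma wg_in_affS: "wg \<in> affS N"
proof -
  have "card (upcrossings wg) = offset"
    unfolding upcrossings_wg offset_def
    by (rule card_image, rule inj_on_subset[OF inj_on_ascents]) (auto simp: crossing_ascents_def)
  moreover have "bij wg" using inj_wg surj_wg by (simp add: bij_def)
  ultimately show ?thesis
    unfolding affS_iff using window_sum_crossings[OF N_pos _ wg_skew_periodic] card_downcrossings_wg
      wg_skew_periodic by simp
qed

end

lemma avoids321_id: "avoids321 id"
  unfolding avoids321_def by auto

lemma exists_avoids321_hecke_image:
  assumes N: "N \<ge> 2" and g: "g \<in> NDPF1 N"
  shows "\<exists>w. w \<in> affS N \<and> hecke_image w g \<and> avoids321 w"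
proof (cases "ascents g = UNIV")
  case True
  have per: "skew_periodic N g" and not_shift: "\<And>t. t \<noteq> 0 \<Longrightarrow> g \<noteq> (\<lambda>i. i - t)"
    using g unfolding NDPF1_def skew_periodic_def by auto
  have "g j < g (j + 1)" for j using True unfolding ascents_def by blast
  then obtain c where c: "g = (\<lambda>j. j + c)" using skew_periodic_strict_mono_shift[OF _ per] N by force
  then have "c = 0" using not_shift[of "- c"] by auto
  then have "g = id" using c by (simp add: id_def)
  then show ?thesis using id_in_affS hecke_image_id avoids321_id by blast
next
  case False
  interpret regressive_map N g
    by unfold_locales (use N False g in \<open>auto simp: NDPF1_def skew_periodic_def\<close>)
  show ?thesis using wg_in_affS hecke_image_wg avoids321_wg by blast
qed

theorem mainTheorem5:
  fixes N :: nat and g :: "int \<Rightarrow> int"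
  assumes "N \<ge> 2" and "g \<in> NDPF1 N"
  shows "\<exists>!w. w \<in> affS N \<and> P_hecke N w = g \<and> avoids321 w"
proof -
  obtain w where w: "w \<in> affS N" "hecke_image w g" "avoids321 w"
    using exists_avoids321_hecke_image[OF assms] by blast
  show ?thesis
  proof (rule ex1I[of _ w])
    show "w \<in> affS N \<and> P_hecke N w = g \<and> avoids321 w" using w P_hecke_iff[OF assms(1) w(1)] by simp
  next
    fix w' assume w': "w' \<in> affS N \<and> P_hecke N w' = g \<and> avoids321 w'"
    then have "hecke_image w' g" using P_hecke_iff[OF assms(1)] by blast
    then show "w' = w" using unique_avoids321_hecke_image[of N w' g w] w w' assms(1) by simp
  qed
qed

end
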